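(* Consider the data model, the two-expert separate-training pMoE and its router-training procedure described in the context. For every integer $l\ge l^*$, with high probability (probability at least $1-1/\mathrm{poly}(n)$) over the random initialization $w_s^{(0)}\sim\mathcal{N}(0,\sigma_r^2 I_{d})$, $s\in\{1,2\}$, with $\sigma_r=\Theta\big(1/(n^2\log(\mathrm{poly}(n))\sqrt d)\big)$ (and over the sampled minibatches), after running minibatch SGD on the router loss with batch size $B_r=\Omega\big(n^2/(1-\delta_d)^2\big)$ and learning rate $\eta_r=\Theta(1/n)$ for $T_r=\Omega\big(1/(1-\delta_d)\big)$ iterations, the returned gating kernels $w_1,w_2$ satisfy: for every $(x,y=+1)$ in the support of $\mathcal{D}$, the index $j$ with $x^{(j)}=o_1$ belongs to $J_1(w_1,x)$; and for every $(x,y=-1)$ in the support of $\mathcal{D}$, the index $j$ with $x^{(j)}=o_2$ belongs to $J_2(w_2,x)$.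
   Context: Data model. An input $x\in\mathbb{R}^{nd}$ consists of $n$ patches $x^{(1)},\dots,x^{(n)}\in\mathbb{R}^d$; labels are $y\in\{+1,-1\}$. There are two unit vectors $o_1,o_2\in\mathbb{R}^d$ (class-discriminative patterns) with $\delta_d:=\langle o_1,o_2\rangle\in(-1,1)$, and $p$ pairwise disjoint sets $S_1,\dots,S_p$ of unit vectors in $\mathbb{R}^d$ (class-irrelevant patterns); there is $\delta_r\in[0,1)$ with $|\langle o_i,q\rangle|\le\delta_r$ for $i=1,2$ and all $q\in\bigcup_j S_j$, and each $S_j$ lies in a ball of diameter $\Theta(\sqrt{(1-\delta_r^2)/(dp^2)})$. Under the distribution $\mathcal{D}$: the two labels each have probability $1/2$; each sample has exactly one patch equal to a class-discriminative pattern, namely $o_1$ if $y=+1$ and $o_2$ if $y=-1$; the remaining $n-1$ patches lie in $\bigcup_j S_j$, and the class-irrelevant patterns are identically distributed in both classes. Let $l^*$ be an integer such that every $x$ in the support of $\mathcal{D}$ has at most $l^*-1$ class-irrelevant patches $q$ with $|\langle o_1-o_2,q\rangle|>(1-\delta_d)/2$. Routers. For gating kernels $w_1,w_2\in\mathbb{R}^d$, let $J_s(w_s,x)\subseteq[n]$ be the index set of the $l$ largest values of $\langle w_s,x^{(j)}\rangle$ over $j\in[n]$ (patches with these indices are sent to expert $s$). Router training. Using i.i.d. samples $(x_i,y_i)$ from $\mathcal{D}$, the kernels are trained by minibatch SGD (fresh minibatch each iteration) on the linear loss $\ell_r(w_1,w_2)=-\frac{1}{B_r}\sum_{(x,y)\in\text{batch}}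 y\,\langle w_1-w_2,\sum_{j=1}^n x^{(j)}\rangle$, updating $w_s\leftarrow w_s-\eta_r\,\partial\ell_r/\partial w_s$ for $s=1,2$. Asymptotic notation may hide constants and factors logarithmic in $n$. *)

theory Defs
  imports "HOL-Probability.Probability"
begin

text \<open>A vector of R^d is represented by a function nat => real, only
  coordinates i < d matter; the data vectors (o1, o2, the class-irrelevant patterns) are
  required to vanish outside {..<d}.  An input x consists of n patches x 0, ..., x (n-1),
  i.e. x :: nat => nat => real (x j i = coordinate i of patch j).  A labelled sample is a
  pair (x, y) with y :: real in {1, -1}.  Explicit carriers (rather than type-indexed
  dimensions) are used so that the hidden asymptotic constants can be quantified
  uniformly over n and d.\<close>

type_synonym vec = "nat \<Rightarrow> real"
type_synonym inp = "nat \<Rightarrow> vec"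
type_synonym sample = "inp \<times> real"

definition vinner :: "nat \<Rightarrow> vec \<Rightarrow> vec \<Rightarrow> real" where
  "vinner d u v = (\<Sum>i<d. u i * v i)"

definition dvec :: "nat \<Rightarrow> vec \<Rightarrow> bool" where
  "dvec d v \<longleftrightarrow> (\<forall>i\<ge>d. v i = 0)"

definition unit_vec :: "nat \<Rightarrow> vec \<Rightarrow> bool" where
  "unit_vec d v \<longleftrightarrow> dvec d v \<and> vinner d v v = 1"

definition dcball :: "nat \<Rightarrow> vec \<Rightarrow> real \<Rightarrow> vec set" where
  "dcball d c r = {v. dvec d v \<and> sqrt (vinner d (\<lambda>i. v i - c i) (\<lambda>i. v i - c i)) \<le> r}"

definition inp_space :: "inp measure" where
  "inp_space = PiM UNIV (\<lambda>_::nat. PiM UNIV (\<lambda>_::nat. (borel :: real measure)))"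

definition sample_space :: "sample measure" where
  "sample_space = inp_space \<Otimes>\<^sub>M (borel :: real measure)"

definition irr_part :: "nat \<Rightarrow> vec \<Rightarrow> vec \<Rightarrow> inp \<Rightarrow> inp" where
  "irr_part n o1 o2 x = (\<lambda>j. if j < n \<and> x j \<noteq> o1 \<and> x j \<noteq> o2 then x j else (\<lambda>_. 0))"

text \<open>A set of inputs invariant under permutation of the n patch positions
  (so that events about such sets only depend on the multiset of patches).\<close>
definition perm_invariant :: "nat \<Rightarrow> inp set \<Rightarrow> bool" where
  "perm_invariant n A \<longleftrightarrow> (\<forall>\<pi> x. \<pi> permutes {..<n} \<longrightarrow> (x \<in> A \<longleftrightarrow> x \<circ> \<pi> \<in> A))"

text \<open>X is a measurable set of D-probability one on which
  all the support conditions hold (e.g. the support of D); cS is the hidden constant in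
  the diameter bound Theta(sqrt((1-delta_r^2)/(d p^2))).\<close>
definition data_model ::
  "real \<Rightarrow> nat \<Rightarrow> nat \<Rightarrow> nat \<Rightarrow> real \<Rightarrow> real \<Rightarrow> vec \<Rightarrow> vec \<Rightarrow> (nat \<Rightarrow> vec set)
    \<Rightarrow> sample measure \<Rightarrow> sample set \<Rightarrow> nat \<Rightarrow> bool" where
  "data_model cS n d p \<delta>d \<delta>r o1 o2 S D X lstar \<longleftrightarrow>
     \<comment> \<open>class-discriminative patterns\<close>
     unit_vec d o1 \<and> unit_vec d o2 \<and> \<delta>d = vinner d o1 o2 \<and> -1 < \<delta>d \<and> \<delta>d < 1 \<and>
     \<comment> \<open>class-irrelevant patterns\<close>
     (\<forall>j<p. \<forall>q\<in>S j. unit_vec d q) \<and>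
     (\<forall>j<p. \<forall>k<p. j \<noteq> k \<longrightarrow> S j \<inter> S k = {}) \<and>
     0 \<le> \<delta>r \<and> \<delta>r < 1 \<and>
     (\<forall>j<p. \<forall>q\<in>S j. \<bar>vinner d o1 q\<bar> \<le> \<delta>r \<and> \<bar>vinner d o2 q\<bar> \<le> \<delta>r) \<and>
     (\<forall>j<p. \<exists>c. S j \<subseteq> dcball d c (cS * sqrt ((1 - \<delta>r\<^sup>2) / (real d * (real p)\<^sup>2)) / 2)) \<and>
     \<comment> \<open>the distribution\<close>
     prob_space D \<and> sets D = sets sample_space \<and>
     X \<in> sets D \<and> emeasure D X = 1 \<and>
     measure D {z \<in> space D. snd z = 1} = 1/2 \<and>
     measure D {z \<in> space D. snd z = -1} = 1/2 \<and>
     (\<forall>(x, y) \<in> X.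
        (y = 1 \<or> y = -1) \<and>
        (\<exists>j<n. x j = (if y = 1 then o1 else o2) \<and>
           (\<forall>j'<n. j' \<noteq> j \<longrightarrow> (\<exists>k<p. x j' \<in> S k))) \<and>
        card {j. j < n \<and> (\<exists>k<p. x j \<in> S k) \<and>
                 \<bar>vinner d (\<lambda>i. o1 i - o2 i) (x j)\<bar> > (1 - \<delta>d) / 2} < lstar) \<and>
     \<comment> \<open>class-irrelevant patterns identically distributed in both classes\<close>
     (\<forall>A \<in> sets inp_space. perm_invariant n A \<longrightarrow>
        measure D {z \<in> space D. snd z = 1 \<and> irr_part n o1 o2 (fst z) \<in> A} =
        measure D {z \<in> space D. snd z = -1 \<and> irr_part n o1 o2 (fst z) \<in> A})"

text \<open>J_s(w,x): J is an index set of the l largest values of <w, x^(j)>, j in [n]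
  (any tie-breaking).\<close>
definition is_topl :: "nat \<Rightarrow> nat \<Rightarrow> nat \<Rightarrow> vec \<Rightarrow> inp \<Rightarrow> nat set \<Rightarrow> bool" where
  "is_topl d n l w x J \<longleftrightarrow> J \<subseteq> {..<n} \<and> card J = l \<and>
     (\<forall>j\<in>J. \<forall>j'\<in>{..<n} - J. vinner d w (x j') \<le> vinner d w (x j))"

definition router_loss :: "nat \<Rightarrow> nat \<Rightarrow> nat \<Rightarrow> (nat \<Rightarrow> sample) \<Rightarrow> nat \<Rightarrow> vec \<Rightarrow> vec \<Rightarrow> real" where
  "router_loss d n B s t w1 w2 = - (1 / real B) * (\<Sum>b<B. snd (s (t*B+b)) *
      vinner d (\<lambda>i. w1 i - w2 i) (\<lambda>i. \<Sum>j<n. fst (s (t*B+b)) j i))"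

definition grad1 :: "nat \<Rightarrow> nat \<Rightarrow> (nat \<Rightarrow> sample) \<Rightarrow> nat \<Rightarrow> vec" where
  "grad1 n B s t = (\<lambda>i. - (1 / real B) * (\<Sum>b<B. snd (s (t*B+b)) * (\<Sum>j<n. fst (s (t*B+b)) j i)))"

definition grad2 :: "nat \<Rightarrow> nat \<Rightarrow> (nat \<Rightarrow> sample) \<Rightarrow> nat \<Rightarrow> vec" where
  "grad2 n B s t = (\<lambda>i. (1 / real B) * (\<Sum>b<B. snd (s (t*B+b)) * (\<Sum>j<n. fst (s (t*B+b)) j i)))"

fun router_sgd :: "nat \<Rightarrow> nat \<Rightarrow> real \<Rightarrow> (nat \<Rightarrow> sample) \<Rightarrow> vec \<Rightarrow> vec \<Rightarrow> nat \<Rightarrow> vec \<times> vec" where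
  "router_sgd n B \<eta> s w1 w2 0 = (w1, w2)"
| "router_sgd n B \<eta> s w1 w2 (Suc t) =
     (let (u1, u2) = router_sgd n B \<eta> s w1 w2 t
      in (\<lambda>i. u1 i - \<eta> * grad1 n B s t i, \<lambda>i. u2 i - \<eta> * grad2 n B s t i))"

definition gauss_init :: "nat \<Rightarrow> real \<Rightarrow> vec measure" where
  "gauss_init d \<sigma> = PiM {..<d} (\<lambda>_. density lborel (normal_density 0 \<sigma>))"

text \<open>Joint randomness: independent initialisations w1, w2 and an i.i.d. sequence of samples
  from D (minibatch t uses samples t*B, ..., t*B+B-1).\<close>
definition train_space :: "nat \<Rightarrow> real \<Rightarrow> sample measure \<Rightarrow> ((vec \<times> vec) \<times> (nat \<Rightarrow> sample)) measure" where
  "train_space d \<sigma> D = (gauss_init d \<sigma> \<Otimes>\<^sub>M gauss_init d \<sigma>) \<Otimes>\<^sub>M PiM UNIV (\<lambda>_::nat. D)"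

end

theory Submission
  imports Defs
begin

(* Since the router loss is linear in the gating kernels, minibatch SGD has a closed form:
   after T steps, w1 = w1(0) + (eta/B) sum_k y_k sum_j x_k^(j) over the T*B samples seen, and
   w2 = w2(0) minus the same sum.  Each summand has mean (o1 - o2)/2, because the class-irrelevant
   patches are identically distributed in both classes, so
   w1 = w1(0) + eta T (o1 - o2)/2 + (eta/B) N
   where N is a sum of T*B independent centred vectors of norm at most n + 1.  Hoeffding's lemma,
   applied to the projections of N, gives a sub-Gaussian tail for the norm of N, and Markov's
   inequality bounds the Gaussian initialisation; with probability 1 - O(1/n) the total error
   has norm below eta T (1 - delta_d)/8.  The drift eta T (o1 - o2)/2 separates o1 from every
   class-irrelevant pattern q with |<o1 - o2, q>| <= (1 - delta_d)/2 by a margin of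
   eta T (1 - delta_d)/4, so only the fewer than l* <= l patches violating this bound can outrank
   o1 in the top-l selection. *)

section \<open>Inner products and norms of coordinate vectors\<close>

definition vnorm :: "nat \<Rightarrow> vec \<Rightarrow> real" where
  "vnorm d v = sqrt (vinner d v v)"

lemma vnorm_eq_L2_set: "vnorm d v = L2_set v {..<d}"
  unfolding vnorm_def vinner_def L2_set_def by (simp add: power2_eq_square)

lemma vnorm_nonneg [simp]: "0 \<le> vnorm d v"
  by (simp add: vnorm_eq_L2_set)

lemma vinner_self_nonneg: "0 \<le> vinner d v v"
  unfolding vinner_def by (auto intro!: sum_nonneg)

lemma vnorm_power2: "(vnorm d v)\<^sup>2 = vinner d v v"
  by (simp add: vnorm_def vinner_self_nonneg)

lemma vinner_commute: "vinner d u v = vinner d v u"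
  unfolding vinner_def by (simp add: mult.commute)

lemma vinner_add_left: "vinner d (\<lambda>i. u i + v i) w = vinner d u w + vinner d v w"
  unfolding vinner_def by (simp add: sum.distrib algebra_simps)

lemma vinner_diff_left: "vinner d (\<lambda>i. u i - v i) w = vinner d u w - vinner d v w"
  unfolding vinner_def by (simp add: sum_subtractf algebra_simps)

lemma vinner_scale_left: "vinner d (\<lambda>i. c * u i) w = c * vinner d u w"
  unfolding vinner_def by (simp add: sum_distrib_left algebra_simps)

lemma vinner_divide_left: "vinner d (\<lambda>i. u i / c) w = vinner d u w / c"
  unfolding vinner_def by (simp add: sum_divide_distrib)

lemma abs_vinner_le: "\<bar>vinner d u v\<bar> \<le> vnorm d u * vnorm d v"
proof -
  have "\<bar>vinner d u v\<bar> \<le> (\<Sum>i<d. \<bar>u i\<bar> * \<bar>v i\<bar>)"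
    unfolding vinner_def abs_mult[symmetric] by (rule sum_abs)
  also have "\<dots> \<le> vnorm d u * vnorm d v"
    unfolding vnorm_eq_L2_set by (rule L2_set_mult_ineq)
  finally show ?thesis .
qed

lemma abs_vinner_unit_le: "vinner d u u = 1 \<Longrightarrow> \<bar>vinner d v u\<bar> \<le> vnorm d v"
  using abs_vinner_le[of d v u] by (simp add: vnorm_def)

lemma vnorm_add_le: "vnorm d (\<lambda>i. u i + v i) \<le> vnorm d u + vnorm d v"
  unfolding vnorm_eq_L2_set by (rule L2_set_triangle_ineq)

lemma vnorm_scale: "vnorm d (\<lambda>i. c * v i) = \<bar>c\<bar> * vnorm d v"
proof -
  have "vinner d (\<lambda>i. c * v i) (\<lambda>i. c * v i) = c\<^sup>2 * vinner d v v"
    unfolding vinner_def by (simp add: sum_distrib_left power2_eq_square algebra_simps)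
  then show ?thesis
    by (simp add: vnorm_def real_sqrt_mult)
qed

lemma vnorm_divide: "vnorm d (\<lambda>i. v i / c) = vnorm d v / \<bar>c\<bar>"
proof -
  have "(\<lambda>i. v i / c) = (\<lambda>i. inverse c * v i)"
    by (simp add: fun_eq_iff divide_inverse mult.commute)
  then show ?thesis
    by (simp only: vnorm_scale abs_inverse divide_inverse mult.commute)
qed

lemma vnorm_uminus: "vnorm d (\<lambda>i. - v i) = vnorm d v"
  by (simp add: vnorm_def vinner_def)

lemma vnorm_diff_le: "vnorm d (\<lambda>i. u i - v i) \<le> vnorm d u + vnorm d v"
  using vnorm_add_le[of d u "\<lambda>i. - v i"] by (simp add: vnorm_uminus)

lemma vnorm_sum_le: "vnorm d (\<lambda>i. \<Sum>k\<in>K. v k i) \<le> (\<Sum>k\<in>K. vnorm d (v k))"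
proof (induction K rule: infinite_finite_induct)
  case (infinite K)
  then show ?case by (simp add: vnorm_def vinner_def)
next
  case empty
  then show ?case by (simp add: vnorm_def vinner_def)
next
  case (insert k K)
  then show ?case
    using vnorm_add_le[of d "v k" "\<lambda>i. \<Sum>k\<in>K. v k i"] by simp
qed

lemma abs_coord_le_vnorm: "c < d \<Longrightarrow> \<bar>v c\<bar> \<le> vnorm d v"
  unfolding vnorm_eq_L2_set L2_set_def
  by (auto intro!: real_le_rsqrt member_le_sum)

lemma vnorm_add_power2:
  "(vnorm d (\<lambda>i. u i + v i))\<^sup>2 = (vnorm d u)\<^sup>2 + 2 * vinner d u v + (vnorm d v)\<^sup>2"
  unfolding vnorm_power2 vinner_def by (simp add: sum.distrib sum_distrib_left algebra_simps)

lemma vinner_perturb_less: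
  assumes "vinner d u u = 1" "vinner d v v = 1"
    and "vinner d m u + 2 * vnorm d e < vinner d m v"
  shows "vinner d (\<lambda>i. m i + e i) u < vinner d (\<lambda>i. m i + e i) v"
  using abs_vinner_unit_le[OF assms(1), of e] abs_vinner_unit_le[OF assms(2), of e] assms(3)
  unfolding vinner_add_left by linarith

section \<open>The trained kernels select the discriminative patch\<close>

definition signed_patch_sum :: "nat \<Rightarrow> sample \<Rightarrow> vec" where
  "signed_patch_sum n z = (\<lambda>i. snd z * (\<Sum>j<n. fst z j i))"

(* The mean of signed_patch_sum n z for z drawn from D, see data_model_grad_noise_mean. *)
definition mean_dir :: "vec \<Rightarrow> vec \<Rightarrow> vec" where
  "mean_dir o1 o2 = (\<lambda>i. (o1 i - o2 i) / 2)"

lemma router_sgd_closed_form: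
  "router_sgd n B \<eta> s w1 w2 T =
     ((\<lambda>i. w1 i + \<eta> / real B * (\<Sum>k<T * B. signed_patch_sum n (s k) i)),
      (\<lambda>i. w2 i - \<eta> / real B * (\<Sum>k<T * B. signed_patch_sum n (s k) i)))"
proof (induction T)
  case 0
  then show ?case by simp
next
  case (Suc T)
  have "(\<Sum>k<Suc T * B. f k) = (\<Sum>k<T * B. f k) + (\<Sum>b<B. f (T * B + b))" for f :: "nat \<Rightarrow> real"
    using sum.atLeastLessThan_concat[of 0 "T * B" "T * B + B" f]
      sum.shift_bounds_nat_ivl[of f 0 "T * B" B]
    by (simp add: atLeast0LessThan add.commute)
  then show ?case
    by (simp add: Suc grad1_def grad2_def signed_patch_sum_def fun_eq_iff field_simps
        add_divide_distrib del: mult_Suc)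
qed

lemma vinner_mean_dir: "vinner d (mean_dir o1 o2) u = (vinner d o1 u - vinner d o2 u) / 2"
  unfolding mean_dir_def by (simp add: vinner_divide_left vinner_diff_left)

lemma mean_dir_margin:
  assumes "vinner d o1 o1 = 1" "vinner d o2 o2 = 1" "\<delta> = 1 - vinner d o1 o2"
    and "\<bar>vinner d (\<lambda>i. o1 i - o2 i) q\<bar> \<le> \<delta> / 2"
  shows "vinner d (mean_dir o1 o2) q + \<delta> / 4 \<le> vinner d (mean_dir o1 o2) o1"
    and "vinner d (\<lambda>i. - mean_dir o1 o2 i) q + \<delta> / 4 \<le> vinner d (\<lambda>i. - mean_dir o1 o2 i) o2"
proof -
  have neg: "vinner d (\<lambda>i. - mean_dir o1 o2 i) u = - vinner d (mean_dir o1 o2) u" for u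
    using vinner_scale_left[of d "-1" "mean_dir o1 o2" u] by simp
  have "vinner d (mean_dir o1 o2) o1 = \<delta> / 2" "vinner d (mean_dir o1 o2) o2 = - \<delta> / 2"
    using assms(1-3) vinner_commute[of d o1 o2] by (simp_all add: vinner_mean_dir)
  moreover have "\<bar>vinner d (mean_dir o1 o2) q\<bar> \<le> \<delta> / 4"
    using assms(4) by (simp add: vinner_mean_dir vinner_diff_left)
  ultimately show "vinner d (mean_dir o1 o2) q + \<delta> / 4 \<le> vinner d (mean_dir o1 o2) o1"
    and "vinner d (\<lambda>i. - mean_dir o1 o2 i) q + \<delta> / 4 \<le> vinner d (\<lambda>i. - mean_dir o1 o2 i) o2"
    unfolding neg by linarith+
qed

lemma kernel_prefers_target:
  assumes "vinner d v v = 1" "vinner d q q = 1"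
    and margin: "vinner d m q + \<delta> / 4 \<le> vinner d m v"
    and "t > 0"
    and err: "vnorm d w0 + \<bar>c\<bar> * vnorm d S < t * \<delta> / 8"
  shows "vinner d (\<lambda>i. w0 i + c * S i + t * m i) q < vinner d (\<lambda>i. w0 i + c * S i + t * m i) v"
proof -
  define e where "e = (\<lambda>i. w0 i + c * S i)"
  have "vnorm d e \<le> vnorm d w0 + \<bar>c\<bar> * vnorm d S"
    unfolding e_def using vnorm_add_le[of d w0 "\<lambda>i. c * S i"] by (simp add: vnorm_scale)
  moreover have "t * vinner d m q + t * \<delta> / 4 \<le> t * vinner d m v"
    using mult_left_mono[OF margin, of t] \<open>t > 0\<close> by (simp add: algebra_simps)
  ultimately have "vinner d (\<lambda>i. t * m i) q + 2 * vnorm d e < vinner d (\<lambda>i. t * m i) v"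
    using err by (simp add: vinner_scale_left)
  then have "vinner d (\<lambda>i. t * m i + e i) q < vinner d (\<lambda>i. t * m i + e i) v"
    by (rule vinner_perturb_less[OF assms(2,1)])
  moreover have "(\<lambda>i. t * m i + e i) = (\<lambda>i. w0 i + c * S i + t * m i)"
    by (simp add: e_def fun_eq_iff)
  ultimately show ?thesis by simp
qed

lemma is_topl_mem:
  assumes topl: "is_topl d n l w x J" and "j < n" "finite R" "card R < l"
    and beaten: "\<And>j'. j' < n \<Longrightarrow> j' \<noteq> j \<Longrightarrow> j' \<notin> R \<Longrightarrow> vinner d w (x j') < vinner d w (x j)"
  shows "j \<in> J"
proof (rule ccontr)
  assume "j \<notin> J"
  have "j' \<in> R" if "j' \<in> J" for j'
  proof -
    have "j' < n" "j' \<noteq> j" "vinner d w (x j) \<le> vinner d w (x j')"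
      using topl that \<open>j \<notin> J\<close> \<open>j < n\<close> unfolding is_topl_def by auto
    then show ?thesis using beaten by fastforce
  qed
  then have "J \<subseteq> R" by blast
  then have "card J \<le> card R" using \<open>finite R\<close> by (rule card_mono[rotated])
  then show False using topl \<open>card R < l\<close> unfolding is_topl_def by simp
qed

definition grad_noise :: "nat \<Rightarrow> vec \<Rightarrow> vec \<Rightarrow> sample \<Rightarrow> vec" where
  "grad_noise n o1 o2 z = (\<lambda>i. signed_patch_sum n z i - mean_dir o1 o2 i)"

lemma data_modelD:
  assumes "data_model cS n d p \<delta>d \<delta>r o1 o2 S D X lstar"
  shows "vinner d o1 o1 = 1" "vinner d o2 o2 = 1" "\<delta>d = vinner d o1 o2" "\<delta>d < 1"
    and "prob_space D" "sets D = sets sample_space" "X \<in> sets D" "emeasure D X = 1"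
    and "measure D {z \<in> space D. snd z = 1} = 1/2" "measure D {z \<in> space D. snd z = -1} = 1/2"
  using assms unfolding data_model_def unit_vec_def by auto

lemma data_model_irrelevant:
  assumes dm: "data_model cS n d p \<delta>d \<delta>r o1 o2 S D X lstar" and "k < p" "q \<in> S k"
  shows "vinner d q q = 1" "q \<noteq> o1" "q \<noteq> o2"
proof -
  have "vinner d q q = 1" "\<bar>vinner d o1 q\<bar> \<le> \<delta>r" "\<bar>vinner d o2 q\<bar> \<le> \<delta>r" "\<delta>r < 1"
    using dm \<open>k < p\<close> \<open>q \<in> S k\<close> unfolding data_model_def unit_vec_def by auto
  then show "vinner d q q = 1" "q \<noteq> o1" "q \<noteq> o2"
    using data_modelD(1,2)[OF dm] by auto
qed

lemma data_model_sample:
  assumes "data_model cS n d p \<delta>d \<delta>r o1 o2 S D X lstar" "(x, y) \<in> X"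
  shows "y = 1 \<or> y = -1"
    and "\<exists>j0<n. x j0 = (if y = 1 then o1 else o2) \<and> (\<forall>j<n. j \<noteq> j0 \<longrightarrow> (\<exists>k<p. x j \<in> S k))"
    and "card {j. j < n \<and> (\<exists>k<p. x j \<in> S k) \<and>
           \<bar>vinner d (\<lambda>i. o1 i - o2 i) (x j)\<bar> > (1 - \<delta>d) / 2} < lstar"
  using assms unfolding data_model_def by fast+

lemma data_model_patch_unit:
  assumes dm: "data_model cS n d p \<delta>d \<delta>r o1 o2 S D X lstar" and "(x, y) \<in> X" "j < n"
  shows "vinner d (x j) (x j) = 1"
proof -
  obtain j0 where "x j0 = (if y = 1 then o1 else o2)" "\<forall>j<n. j \<noteq> j0 \<longrightarrow> (\<exists>k<p. x j \<in> S k)"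
    using data_model_sample(2)[OF assms(1,2)] by blast
  then show ?thesis
    using data_modelD(1,2)[OF dm] data_model_irrelevant(1)[OF dm] \<open>j < n\<close>
    by (cases "j = j0") auto
qed

lemma data_model_topl_mem:
  assumes dm: "data_model cS n d p \<delta>d \<delta>r o1 o2 S D X lstar" and "(x, y) \<in> X" "lstar \<le> l"
    and topl: "is_topl d n l w x J" and "j < n" and xj: "x j = (if y = 1 then o1 else o2)"
    and wins: "\<And>q. vinner d q q = 1 \<Longrightarrow> \<bar>vinner d (\<lambda>i. o1 i - o2 i) q\<bar> \<le> (1 - \<delta>d) / 2 \<Longrightarrow>
                 vinner d w q < vinner d w (x j)"
  shows "j \<in> J"
proof -
  define R where "R = {j. j < n \<and> (\<exists>k<p. x j \<in> S k) \<and>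
                         \<bar>vinner d (\<lambda>i. o1 i - o2 i) (x j)\<bar> > (1 - \<delta>d) / 2}"
  obtain j0 where j0: "x j0 = (if y = 1 then o1 else o2)"
    and irr: "\<And>j'. j' < n \<Longrightarrow> j' \<noteq> j0 \<Longrightarrow> \<exists>k<p. x j' \<in> S k"
    using data_model_sample(2)[OF dm \<open>(x, y) \<in> X\<close>] by blast
  have "j = j0"
    using irr[OF \<open>j < n\<close>] xj data_model_irrelevant(2,3)[OF dm] by (cases "y = 1") auto
  show ?thesis
  proof (rule is_topl_mem[OF topl \<open>j < n\<close>])
    show "finite R" "card R < l"
      using data_model_sample(3)[OF dm \<open>(x, y) \<in> X\<close>] \<open>lstar \<le> l\<close> by (auto simp: R_def)
    fix j' assume "j' < n" "j' \<noteq> j" "j' \<notin> R"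
    then obtain k where "k < p" "x j' \<in> S k"
      using irr \<open>j = j0\<close> by blast
    then show "vinner d w (x j') < vinner d w (x j)"
      using wins data_model_irrelevant(1)[OF dm] \<open>j' < n\<close> \<open>j' \<notin> R\<close> unfolding R_def by force
  qed
qed

lemma router_sgd_routes_discriminative:
  assumes dm: "data_model cS n d p \<delta>d \<delta>r o1 o2 S D X lstar" and "lstar \<le> l"
    and "\<eta> > 0" "T > 0" "B > 0"
    and small: "vnorm d w10 + \<eta> / real B * vnorm d (\<lambda>i. \<Sum>k<T * B. grad_noise n o1 o2 (s k) i)
                  < \<eta> * real T * (1 - \<delta>d) / 8"
               "vnorm d w20 + \<eta> / real B * vnorm d (\<lambda>i. \<Sum>k<T * B. grad_noise n o1 o2 (s k) i)
                  < \<eta> * real T * (1 - \<delta>d) / 8"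
  shows "let (w1, w2) = router_sgd n B \<eta> s w10 w20 T in
           \<forall>(x, y) \<in> X. \<forall>j<n.
             (y = 1 \<and> x j = o1 \<longrightarrow> (\<forall>J. is_topl d n l w1 x J \<longrightarrow> j \<in> J)) \<and>
             (y = -1 \<and> x j = o2 \<longrightarrow> (\<forall>J. is_topl d n l w2 x J \<longrightarrow> j \<in> J))"
proof -
  define N where "N = (\<lambda>i. \<Sum>k<T * B. grad_noise n o1 o2 (s k) i)"
  define m where "m = mean_dir o1 o2"
  define t where "t = \<eta> * real T"
  have t: "t > 0" using \<open>\<eta> > 0\<close> \<open>T > 0\<close> by (simp add: t_def)
  have "(\<Sum>k<T * B. signed_patch_sum n (s k) i) = N i + real T * real B * m i" for i
    by (simp add: N_def m_def grad_noise_def sum_subtractf)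
  then have sgd: "router_sgd n B \<eta> s w10 w20 T =
      ((\<lambda>i. w10 i + \<eta> / real B * N i + t * m i),
       (\<lambda>i. w20 i + - (\<eta> / real B) * N i + t * - m i))"
    using \<open>B > 0\<close> by (simp add: router_sgd_closed_form t_def fun_eq_iff field_simps)
  have abs_step: "\<bar>\<eta> / real B\<bar> = \<eta> / real B" "\<bar>- (\<eta> / real B)\<bar> = \<eta> / real B"
    using \<open>\<eta> > 0\<close> by simp_all
  have err: "vnorm d w10 + \<bar>\<eta> / real B\<bar> * vnorm d N < t * (1 - \<delta>d) / 8"
    "vnorm d w20 + \<bar>- (\<eta> / real B)\<bar> * vnorm d N < t * (1 - \<delta>d) / 8"
    unfolding abs_step N_def t_def using small by simp_all
  have unit: "vinner d o1 o1 = 1" "vinner d o2 o2 = 1" "1 - \<delta>d = 1 - vinner d o1 o2"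
    using data_modelD[OF dm] by simp_all
  note margin = mean_dir_margin[OF unit, folded m_def]
  have "j \<in> J" if "(x, y) \<in> X" "j < n" "y = 1" "x j = o1"
    and "is_topl d n l (\<lambda>i. w10 i + \<eta> / real B * N i + t * m i) x J" for x y j J
    using data_model_topl_mem[OF dm that(1) \<open>lstar \<le> l\<close> that(5,2)] that(3,4)
      kernel_prefers_target[OF unit(1) _ margin(1) t err(1)] by auto
  moreover have "j \<in> J" if "(x, y) \<in> X" "j < n" "y = -1" "x j = o2"
    and "is_topl d n l (\<lambda>i. w20 i + - (\<eta> / real B) * N i + t * - m i) x J" for x y j J
    using data_model_topl_mem[OF dm that(1) \<open>lstar \<le> l\<close> that(5,2)] that(3,4)
      kernel_prefers_target[OF unit(2) _ margin(2) t err(2)] by auto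
  ultimately show ?thesis
    unfolding sgd Let_def by fast
qed

section \<open>Concentration of sums of bounded centred random vectors\<close>

lemma nn_integral_exp_vinner_le:
  fixes D :: "'a measure" and Z :: "'a \<Rightarrow> vec"
  assumes "prob_space D" and [measurable]: "\<And>i. (\<lambda>z. Z z i) \<in> borel_measurable D"
    and bound: "AE z in D. vnorm d (Z z) \<le> M"
    and mean: "\<And>i. i < d \<Longrightarrow> prob_space.expectation D (\<lambda>z. Z z i) = 0"
    and "t > 0"
  shows "(\<integral>\<^sup>+z. ennreal (exp (t * vinner d s (Z z))) \<partial>D)
           \<le> ennreal (exp (t\<^sup>2 * (vnorm d s * M)\<^sup>2 / 2))"
proof -
  interpret prob_space D by fact
  define f where "f z = vinner d s (Z z)" for z
  define R where "R = vnorm d s * M"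
  have [measurable]: "f \<in> borel_measurable D" unfolding f_def vinner_def by measurable
  have "integrable D (\<lambda>z. Z z i)" if "i < d" for i
  proof (rule integrable_const_bound[where B = M])
    show "AE z in D. norm (Z z i) \<le> M"
      using bound by eventually_elim (metis abs_coord_le_vnorm[OF that] order.trans real_norm_def)
  qed simp
  then have "expectation f = 0"
    unfolding f_def vinner_def using mean by (simp add: Bochner_Integration.integral_sum)
  have "AE z in D. f z \<in> {-R..R}"
    using bound
  proof eventually_elim
    case (elim z)
    have "\<bar>f z\<bar> \<le> vnorm d s * vnorm d (Z z)" unfolding f_def by (rule abs_vinner_le)
    also have "\<dots> \<le> R" unfolding R_def using elim by (intro mult_left_mono) auto
    finally show ?case by auto
  qed
  then interpret interval_bounded_random_variable D f "-R" R
    by unfold_locales simp_all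
  show ?thesis
    using Hoeffdings_lemma_nn_integral_0[OF \<open>t > 0\<close> \<open>expectation f = 0\<close>]
    by (simp add: f_def R_def power2_eq_square mult_ac)
qed

lemma nn_integral_exp_vnorm_add_le:
  fixes D :: "'a measure" and Z :: "'a \<Rightarrow> vec"
  assumes D: "prob_space D" and Z: "\<And>i. (\<lambda>z. Z z i) \<in> borel_measurable D"
    and bound: "AE z in D. vnorm d (Z z) \<le> M"
    and mean: "\<And>i. i < d \<Longrightarrow> prob_space.expectation D (\<lambda>z. Z z i) = 0"
    and "\<alpha> > 0"
  shows "(\<integral>\<^sup>+z. ennreal (exp (\<alpha> * (vnorm d (\<lambda>i. s i + Z z i))\<^sup>2)) \<partial>D)
           \<le> ennreal (exp (\<alpha> * M\<^sup>2 + \<alpha> * (1 + 2 * \<alpha> * M\<^sup>2) * (vnorm d s)\<^sup>2))"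
proof -
  interpret prob_space D by fact
  define c where "c = ennreal (exp (\<alpha> * M\<^sup>2 + \<alpha> * (vnorm d s)\<^sup>2))"
  have "(\<integral>\<^sup>+z. ennreal (exp (\<alpha> * (vnorm d (\<lambda>i. s i + Z z i))\<^sup>2)) \<partial>D)
      \<le> (\<integral>\<^sup>+z. c * ennreal (exp ((2 * \<alpha>) * vinner d s (Z z))) \<partial>D)"
    using bound
  proof (intro nn_integral_mono_AE, eventually_elim)
    case (elim z)
    have "(vnorm d (Z z))\<^sup>2 \<le> M\<^sup>2" using elim by (simp add: power_mono)
    then have "\<alpha> * (vnorm d (\<lambda>i. s i + Z z i))\<^sup>2
        \<le> \<alpha> * M\<^sup>2 + \<alpha> * (vnorm d s)\<^sup>2 + (2 * \<alpha>) * vinner d s (Z z)"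
      unfolding vnorm_add_power2 using \<open>\<alpha> > 0\<close> by (simp add: algebra_simps)
    then show ?case by (simp add: c_def ennreal_mult[symmetric] exp_add[symmetric])
  qed
  also have "\<dots> = c * (\<integral>\<^sup>+z. ennreal (exp ((2 * \<alpha>) * vinner d s (Z z))) \<partial>D)"
    using Z by (intro nn_integral_cmult) (simp add: vinner_def)
  also have "\<dots> \<le> c * ennreal (exp ((2 * \<alpha>)\<^sup>2 * (vnorm d s * M)\<^sup>2 / 2))"
    using nn_integral_exp_vinner_le[OF D Z bound mean, of "2 * \<alpha>"] \<open>\<alpha> > 0\<close>
    by (intro mult_left_mono) auto
  also have "\<dots> = ennreal (exp (\<alpha> * M\<^sup>2 + \<alpha> * (1 + 2 * \<alpha> * M\<^sup>2) * (vnorm d s)\<^sup>2))"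
    by (simp add: c_def ennreal_mult[symmetric] exp_add[symmetric] power_mult_distrib
        power2_eq_square algebra_simps)
  finally show ?thesis .
qed

(* Bookkeeping for the induction below, with u = alpha M^2: adding one summand turns
   the parameter alpha into alpha (1 + 2 alpha M^2). *)
lemma mgf_exponent_step:
  fixes u :: real
  assumes "0 \<le> u" "4 * (real K + 1) * u \<le> 1"
  shows "4 * real K * (u * (1 + 2 * u)) \<le> 1"
    and "u + 2 * real K * (u * (1 + 2 * u)) \<le> 2 * (real K + 1) * u"
proof -
  have Ku: "4 * real K * u \<le> 1 - 4 * u" using assms(2) by (simp add: algebra_simps)
  have "4 * real K * (u * (1 + 2 * u)) = (4 * real K * u) * (1 + 2 * u)" by simp
  also have "\<dots> \<le> (1 - 4 * u) * (1 + 2 * u)" using Ku \<open>0 \<le> u\<close> by (intro mult_right_mono) auto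
  also have "\<dots> \<le> 1" using \<open>0 \<le> u\<close> by (simp add: algebra_simps)
  finally show "4 * real K * (u * (1 + 2 * u)) \<le> 1" .
  have "(4 * real K * u) * u \<le> 1 * u" using Ku \<open>0 \<le> u\<close> by (intro mult_right_mono) auto
  then show "u + 2 * real K * (u * (1 + 2 * u)) \<le> 2 * (real K + 1) * u"
    by (simp add: algebra_simps)
qed

lemma nn_integral_exp_vnorm_sum_le:
  fixes D :: "'a measure" and Z :: "'a \<Rightarrow> vec"
  assumes D: "prob_space D" and Z[measurable]: "\<And>i. (\<lambda>z. Z z i) \<in> borel_measurable D"
    and bound: "AE z in D. vnorm d (Z z) \<le> M"
    and mean: "\<And>i. i < d \<Longrightarrow> prob_space.expectation D (\<lambda>z. Z z i) = 0"
    and "\<alpha> > 0" "4 * real K * \<alpha> * M\<^sup>2 \<le> 1"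
  shows "(\<integral>\<^sup>+x. ennreal (exp (\<alpha> * (vnorm d (\<lambda>i. \<Sum>k<K. Z (x k) i))\<^sup>2)) \<partial>PiM {..<K} (\<lambda>_. D))
           \<le> ennreal (exp (2 * real K * \<alpha> * M\<^sup>2))"
  using assms(5,6)
proof (induction K arbitrary: \<alpha>)
  case 0
  interpret prob_space "PiM {} (\<lambda>_. D)"
    by (rule prob_space_PiM) (use D in auto)
  show ?case by (simp add: vnorm_def vinner_def emeasure_space_1)
next
  case (Suc K)
  interpret D: prob_space D by (fact D)
  interpret product_sigma_finite "\<lambda>_::nat. D" by unfold_locales
  define \<alpha>' where "\<alpha>' = \<alpha> * (1 + 2 * \<alpha> * M\<^sup>2)"
  have u: "0 \<le> \<alpha> * M\<^sup>2" "4 * (real K + 1) * (\<alpha> * M\<^sup>2) \<le> 1"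
    using Suc.prems by (simp_all add: algebra_simps)
  have "\<alpha>' > 0" unfolding \<alpha>'_def using Suc.prems by (simp add: add_pos_nonneg)
  moreover have "4 * real K * \<alpha>' * M\<^sup>2 \<le> 1"
    using mgf_exponent_step(1)[OF u] by (simp add: \<alpha>'_def algebra_simps)
  ultimately have IH: "(\<integral>\<^sup>+x. ennreal (exp (\<alpha>' * (vnorm d (\<lambda>i. \<Sum>k<K. Z (x k) i))\<^sup>2))
                          \<partial>PiM {..<K} (\<lambda>_. D))
      \<le> ennreal (exp (2 * real K * \<alpha>' * M\<^sup>2))"
    by (rule Suc.IH)
  have split: "(\<lambda>i. \<Sum>k<Suc K. Z ((x(K := z)) k) i) = (\<lambda>i. (\<Sum>k<K. Z (x k) i) + Z z i)" for x z
    by (auto simp: fun_eq_iff intro!: sum.cong)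
  have "(\<integral>\<^sup>+x. ennreal (exp (\<alpha> * (vnorm d (\<lambda>i. \<Sum>k<Suc K. Z (x k) i))\<^sup>2)) \<partial>PiM {..<Suc K} (\<lambda>_. D))
     = (\<integral>\<^sup>+x. (\<integral>\<^sup>+z. ennreal (exp (\<alpha> * (vnorm d (\<lambda>i. (\<Sum>k<K. Z (x k) i) + Z z i))\<^sup>2)) \<partial>D)
          \<partial>PiM {..<K} (\<lambda>_. D))"
    unfolding lessThan_Suc split[symmetric]
    by (rule product_nn_integral_insert) (auto simp: vnorm_def vinner_def)
  also have "\<dots> \<le> (\<integral>\<^sup>+x. ennreal (exp (\<alpha> * M\<^sup>2))
                    * ennreal (exp (\<alpha>' * (vnorm d (\<lambda>i. \<Sum>k<K. Z (x k) i))\<^sup>2))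
                  \<partial>PiM {..<K} (\<lambda>_. D))"
    using nn_integral_exp_vnorm_add_le[OF D Z bound mean \<open>\<alpha> > 0\<close>]
    by (intro nn_integral_mono) (simp add: \<alpha>'_def ennreal_mult[symmetric] exp_add[symmetric])
  also have "\<dots> = ennreal (exp (\<alpha> * M\<^sup>2))
                  * (\<integral>\<^sup>+x. ennreal (exp (\<alpha>' * (vnorm d (\<lambda>i. \<Sum>k<K. Z (x k) i))\<^sup>2))
                       \<partial>PiM {..<K} (\<lambda>_. D))"
    by (rule nn_integral_cmult) (auto simp: vnorm_def vinner_def)
  also have "\<dots> \<le> ennreal (exp (\<alpha> * M\<^sup>2)) * ennreal (exp (2 * real K * \<alpha>' * M\<^sup>2))"
    using IH by (rule mult_left_mono) simp
  also have "\<dots> \<le> ennreal (exp (2 * real (Suc K) * \<alpha> * M\<^sup>2))"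
    using mgf_exponent_step(2)[OF u]
    by (simp add: \<alpha>'_def ennreal_mult[symmetric] exp_add[symmetric] algebra_simps)
  finally show ?case .
qed

lemma emeasure_vnorm_sum_tail_le:
  fixes D :: "'a measure" and Z :: "'a \<Rightarrow> vec"
  assumes D: "prob_space D" and Z[measurable]: "\<And>i. (\<lambda>z. Z z i) \<in> borel_measurable D"
    and bound: "AE z in D. vnorm d (Z z) \<le> M"
    and mean: "\<And>i. i < d \<Longrightarrow> prob_space.expectation D (\<lambda>z. Z z i) = 0"
    and "N > 0" "M > 0"
  shows "emeasure (PiM {..<N} (\<lambda>_. D))
           {x \<in> space (PiM {..<N} (\<lambda>_. D)). t < (vnorm d (\<lambda>i. \<Sum>k<N. Z (x k) i))\<^sup>2}
         \<le> ennreal (exp (1/2 - t / (4 * real N * M\<^sup>2)))"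
proof -
  define \<alpha> where "\<alpha> = 1 / (4 * real N * M\<^sup>2)"
  have "\<alpha> > 0" "4 * real N * \<alpha> * M\<^sup>2 \<le> 1"
    using \<open>N > 0\<close> \<open>M > 0\<close> by (simp_all add: \<alpha>_def)
  let ?P = "PiM {..<N} (\<lambda>_. D)"
  let ?q = "\<lambda>x. (vnorm d (\<lambda>i. \<Sum>k<N. Z (x k) i))\<^sup>2"
  let ?A = "{x \<in> space ?P. t < ?q x}"
  have "?A \<in> sets ?P" by (simp add: vnorm_def vinner_def)
  then have "emeasure ?P ?A = (\<integral>\<^sup>+x. indicator ?A x \<partial>?P)" by simp
  also have "\<dots> \<le> (\<integral>\<^sup>+x. ennreal (exp (- \<alpha> * t)) * ennreal (exp (\<alpha> * ?q x)) \<partial>?P)"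
  proof (rule nn_integral_mono)
    fix x
    have "x \<in> ?A \<Longrightarrow> 1 \<le> exp (- \<alpha> * t) * exp (\<alpha> * ?q x)"
      using \<open>\<alpha> > 0\<close> by (simp add: exp_add[symmetric] algebra_simps)
    then show "indicator ?A x \<le> ennreal (exp (- \<alpha> * t)) * ennreal (exp (\<alpha> * ?q x))"
      by (auto simp: indicator_def ennreal_mult[symmetric])
  qed
  also have "\<dots> = ennreal (exp (- \<alpha> * t)) * (\<integral>\<^sup>+x. ennreal (exp (\<alpha> * ?q x)) \<partial>?P)"
    by (rule nn_integral_cmult) (auto simp: vnorm_def vinner_def)
  also have "\<dots> \<le> ennreal (exp (- \<alpha> * t)) * ennreal (exp (2 * real N * \<alpha> * M\<^sup>2))"
    using nn_integral_exp_vnorm_sum_le[OF D Z bound mean \<open>\<alpha> > 0\<close> \<open>4 * real N * \<alpha> * M\<^sup>2 \<le> 1\<close>]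
    by (rule mult_left_mono) auto
  also have "\<dots> = ennreal (exp (1/2 - t / (4 * real N * M\<^sup>2)))"
    using \<open>N > 0\<close> \<open>M > 0\<close>
    by (simp add: ennreal_mult[symmetric] exp_add[symmetric] \<alpha>_def field_simps)
  finally show ?thesis .
qed

lemma emeasure_vnorm_sum_tail_le_PiM_UNIV:
  fixes D :: "'a measure" and Z :: "'a \<Rightarrow> vec"
  assumes D: "prob_space D" and Z[measurable]: "\<And>i. (\<lambda>z. Z z i) \<in> borel_measurable D"
    and bound: "AE z in D. vnorm d (Z z) \<le> M"
    and mean: "\<And>i. i < d \<Longrightarrow> prob_space.expectation D (\<lambda>z. Z z i) = 0"
    and "N > 0" "M > 0"
  shows "emeasure (PiM UNIV (\<lambda>_::nat. D))
           {x \<in> space (PiM UNIV (\<lambda>_::nat. D)). t < (vnorm d (\<lambda>i. \<Sum>k<N. Z (x k) i))\<^sup>2}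
         \<le> ennreal (exp (1/2 - t / (4 * real N * M\<^sup>2)))"
proof -
  interpret D: prob_space D by (fact D)
  interpret product_prob_space "\<lambda>_::nat. D" UNIV
    by unfold_locales
  let ?P = "PiM {..<N} (\<lambda>_. D)"
  let ?A = "{x \<in> space ?P. t < (vnorm d (\<lambda>i. \<Sum>k<N. Z (x k) i))\<^sup>2}"
  have "?A \<in> sets ?P" by (simp add: vnorm_def vinner_def)
  have "{x \<in> space (PiM UNIV (\<lambda>_. D)). t < (vnorm d (\<lambda>i. \<Sum>k<N. Z (x k) i))\<^sup>2}
      = (\<lambda>x. restrict x {..<N}) -` ?A \<inter> space (PiM UNIV (\<lambda>_. D))"
    by (auto simp: space_PiM)
  then have "emeasure (PiM UNIV (\<lambda>_. D))
      {x \<in> space (PiM UNIV (\<lambda>_. D)). t < (vnorm d (\<lambda>i. \<Sum>k<N. Z (x k) i))\<^sup>2}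
      = emeasure (distr (PiM UNIV (\<lambda>_. D)) ?P (\<lambda>x. restrict x {..<N})) ?A"
    using \<open>?A \<in> sets ?P\<close> by (simp add: emeasure_distr measurable_restrict_subset)
  also have "\<dots> = emeasure ?P ?A"
    by (subst distr_PiM_restrict_finite) auto
  also have "\<dots> \<le> ennreal (exp (1/2 - t / (4 * real N * M\<^sup>2)))"
    by (rule emeasure_vnorm_sum_tail_le[OF assms])
  finally show ?thesis .
qed

section \<open>Gaussian initialisation\<close>

lemma nn_integral_normal_second_moment:
  assumes "\<sigma> > 0"
  shows "(\<integral>\<^sup>+y. ennreal (y\<^sup>2) \<partial>density lborel (normal_density 0 \<sigma>)) = ennreal (\<sigma>\<^sup>2)"
proof -
  have "(\<integral>\<^sup>+y. ennreal (y\<^sup>2) \<partial>density lborel (normal_density 0 \<sigma>))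
      = (\<integral>\<^sup>+y. ennreal (normal_density 0 \<sigma> y * (y - 0) ^ (2 * 1)) \<partial>lborel)"
    by (subst nn_integral_density) (auto simp: ennreal_mult normal_density_nonneg)
  also have "\<dots> = ennreal (\<integral>y. normal_density 0 \<sigma> y * (y - 0) ^ (2 * 1) \<partial>lborel)"
    using integrable_normal_moment[of \<sigma> 0 "2 * 1"] \<open>\<sigma> > 0\<close>
    by (intro nn_integral_eq_integral) (auto simp: normal_density_nonneg)
  also have "(\<integral>y. normal_density 0 \<sigma> y * (y - 0) ^ (2 * 1) \<partial>lborel) = \<sigma>\<^sup>2"
    using integral_normal_moment_even[of \<sigma> 0 1] \<open>\<sigma> > 0\<close> by simp
  finally show ?thesis .
qed

lemma gauss_init_prob_space: "\<sigma> > 0 \<Longrightarrow> prob_space (gauss_init d \<sigma>)"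
  unfolding gauss_init_def by (intro prob_space_PiM prob_space_normal_density)

lemma nn_integral_gauss_init_vnorm_sq:
  assumes "\<sigma> > 0"
  shows "(\<integral>\<^sup>+w. ennreal ((vnorm d w)\<^sup>2) \<partial>gauss_init d \<sigma>) = ennreal (real d * \<sigma>\<^sup>2)"
proof -
  let ?N = "density lborel (normal_density 0 \<sigma>)"
  interpret N: prob_space ?N using \<open>\<sigma> > 0\<close> by (rule prob_space_normal_density)
  interpret product_prob_space "\<lambda>_::nat. ?N" "{..<d}" by unfold_locales
  have coord: "(\<integral>\<^sup>+w. ennreal ((w i)\<^sup>2) \<partial>gauss_init d \<sigma>) = ennreal (\<sigma>\<^sup>2)" if "i < d" for i
  proof -
    have "(\<integral>\<^sup>+w. ennreal ((w i)\<^sup>2) \<partial>gauss_init d \<sigma>)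
        = (\<integral>\<^sup>+y. ennreal (y\<^sup>2) \<partial>distr (gauss_init d \<sigma>) ?N (\<lambda>w. w i))"
      unfolding gauss_init_def using that by (subst nn_integral_distr) auto
    also have "distr (gauss_init d \<sigma>) ?N (\<lambda>w. w i) = ?N"
      unfolding gauss_init_def by (rule PiM_component) (simp add: that)
    finally show ?thesis using nn_integral_normal_second_moment[OF \<open>\<sigma> > 0\<close>] by simp
  qed
  have "(\<integral>\<^sup>+w. ennreal ((vnorm d w)\<^sup>2) \<partial>gauss_init d \<sigma>)
      = (\<integral>\<^sup>+w. (\<Sum>i<d. ennreal ((w i)\<^sup>2)) \<partial>gauss_init d \<sigma>)"
    unfolding vnorm_power2 vinner_def
    by (intro nn_integral_cong) (simp add: power2_eq_square sum_ennreal)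
  also have "\<dots> = (\<Sum>i<d. (\<integral>\<^sup>+w. ennreal ((w i)\<^sup>2) \<partial>gauss_init d \<sigma>))"
    by (rule nn_integral_sum) (auto simp: gauss_init_def)
  also have "\<dots> = ennreal (real d * \<sigma>\<^sup>2)"
    using coord by (simp add: ennreal_of_nat_eq_real_of_nat ennreal_mult)
  finally show ?thesis .
qed

lemma emeasure_gauss_init_vnorm_gt_le:
  assumes "\<sigma> > 0" "\<epsilon> > 0"
  shows "emeasure (gauss_init d \<sigma>) {w \<in> space (gauss_init d \<sigma>). \<epsilon> < vnorm d w}
           \<le> ennreal (real d * \<sigma>\<^sup>2 / \<epsilon>\<^sup>2)"
proof -
  let ?G = "gauss_init d \<sigma>"
  let ?A = "{w \<in> space ?G. \<epsilon> < vnorm d w}"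
  have "?A \<in> sets ?G" by (simp add: vnorm_def vinner_def gauss_init_def)
  then have "emeasure ?G ?A = (\<integral>\<^sup>+w. indicator ?A w \<partial>?G)" by simp
  also have "\<dots> \<le> (\<integral>\<^sup>+w. ennreal (1 / \<epsilon>\<^sup>2) * ennreal ((vnorm d w)\<^sup>2) \<partial>?G)"
  proof (rule nn_integral_mono)
    fix w
    have "w \<in> ?A \<Longrightarrow> \<epsilon>\<^sup>2 \<le> (vnorm d w)\<^sup>2"
      using \<open>\<epsilon> > 0\<close> by (intro power_mono) auto
    then have "w \<in> ?A \<Longrightarrow> 1 \<le> 1 / \<epsilon>\<^sup>2 * (vnorm d w)\<^sup>2"
      using \<open>\<epsilon> > 0\<close> by (simp add: field_simps)
    then show "indicator ?A w \<le> ennreal (1 / \<epsilon>\<^sup>2) * ennreal ((vnorm d w)\<^sup>2)"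
      by (auto simp: indicator_def ennreal_mult[symmetric] simp del: ennreal_1 intro!: ennreal_leI)
  qed
  also have "\<dots> = ennreal (1 / \<epsilon>\<^sup>2) * (\<integral>\<^sup>+w. ennreal ((vnorm d w)\<^sup>2) \<partial>?G)"
    by (rule nn_integral_cmult) (auto simp: vnorm_def vinner_def gauss_init_def)
  also have "\<dots> = ennreal (real d * \<sigma>\<^sup>2 / \<epsilon>\<^sup>2)"
    using nn_integral_gauss_init_vnorm_sq[OF \<open>\<sigma> > 0\<close>] by (simp add: ennreal_mult[symmetric])
  finally show ?thesis .
qed

section \<open>Moments of the gradient noise under the data model\<close>

lemma integral_indicator_eq_if_measure_eq:
  fixes f :: "'a \<Rightarrow> real"
  assumes "finite_measure M" "A \<in> sets M" "B \<in> sets M" and [measurable]: "f \<in> borel_measurable M"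
    and eq: "\<And>U. U \<in> sets borel \<Longrightarrow> measure M (f -` U \<inter> A) = measure M (f -` U \<inter> B)"
  shows "(\<integral>x. indicator A x * f x \<partial>M) = (\<integral>x. indicator B x * f x \<partial>M)"
proof -
  interpret finite_measure M by fact
  have distr_restrict:
    "emeasure (distr (restrict_space M C) borel f) U = ennreal (measure M (f -` U \<inter> C))"
    if "C \<in> sets M" "U \<in> sets borel" for C U
    using that sets.sets_into_space[OF \<open>C \<in> sets M\<close>]
    by (subst emeasure_distr)
       (auto simp: measurable_restrict_space1 space_restrict_space emeasure_restrict_space
             emeasure_eq_measure Int_absorb2 inf_commute[of _ C]
             intro!: arg_cong[where f = "emeasure M"])
  have "distr (restrict_space M A) borel f = distr (restrict_space M B) borel f"
    by (rule measure_eqI) (simp_all add: distr_restrict \<open>A \<in> sets M\<close> \<open>B \<in> sets M\<close> eq)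
  moreover have "(\<integral>x. indicator C x * f x \<partial>M) = (\<integral>t. t \<partial>distr (restrict_space M C) borel f)"
    if "C \<in> sets M" for C
    using that by (simp add: integral_distr measurable_restrict_space1 integral_restrict_space)
  ultimately show ?thesis using assms(2,3) by simp
qed

lemma space_inp_space: "space inp_space = UNIV"
  by (auto simp: inp_space_def space_PiM PiE_def extensional_def)

lemma measurable_inp_coord: "(\<lambda>x::inp. x j i) \<in> borel_measurable inp_space"
proof -
  have "(\<lambda>x::inp. x j) \<in> inp_space \<rightarrow>\<^sub>M PiM UNIV (\<lambda>_. borel)"
    unfolding inp_space_def by (rule measurable_component_singleton) simp
  moreover have "(\<lambda>v::vec. v i) \<in> PiM UNIV (\<lambda>_. borel) \<rightarrow>\<^sub>M borel"
    by (rule measurable_component_singleton) simp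
  ultimately show ?thesis by (rule measurable_compose)
qed

lemma measurable_patch_coord [measurable]: "(\<lambda>z. fst z j i) \<in> borel_measurable sample_space"
  using measurable_inp_coord[measurable] unfolding sample_space_def by measurable

lemma measurable_label [measurable]: "snd \<in> borel_measurable sample_space"
  unfolding sample_space_def by measurable

lemma sets_inp_patch_eq: "{x \<in> space inp_space. x j = v} \<in> sets inp_space"
proof -
  have "{x \<in> space inp_space. x j = v} = space inp_space \<inter> (\<Inter>i. {x \<in> space inp_space. x j i = v i})"
    by auto
  also have "\<dots> \<in> sets inp_space"
    using measurable_inp_coord[measurable] by (intro sets.Int sets.countable_INT') auto
  finally show ?thesis .
qed

lemma pred_patch_eq [measurable]: "Measurable.pred sample_space (\<lambda>z. fst z j = v)"
  using pred_sets1[OF sets_inp_patch_eq, of fst sample_space j v]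
  by (simp add: sample_space_def)

lemma data_model_measurable:
  assumes "data_model cS n d p \<delta>d \<delta>r o1 o2 S D X lstar" "f \<in> borel_measurable sample_space"
  shows "f \<in> borel_measurable D"
  using assms(2) by (simp add: measurable_cong_sets[OF data_modelD(6)[OF assms(1)] refl])

lemma data_model_label_event:
  assumes "data_model cS n d p \<delta>d \<delta>r o1 o2 S D X lstar"
  shows "{z \<in> space D. snd z = c} \<in> sets D"
proof -
  have [measurable]: "snd \<in> borel_measurable D"
    by (rule data_model_measurable[OF assms measurable_label])
  show ?thesis by measurable
qed

lemma data_model_measurable_grad_noise:
  assumes "data_model cS n d p \<delta>d \<delta>r o1 o2 S D X lstar"
  shows "(\<lambda>z. grad_noise n o1 o2 z i) \<in> borel_measurable D"
proof -
  have eq: "(\<lambda>z. grad_noise n o1 o2 z i) = (\<lambda>z. snd z * (\<Sum>j<n. fst z j i) - mean_dir o1 o2 i)"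
    by (simp add: fun_eq_iff grad_noise_def signed_patch_sum_def)
  show ?thesis
    unfolding eq by (rule data_model_measurable[OF assms]) measurable
qed

lemma data_model_AE_in_X:
  assumes "data_model cS n d p \<delta>d \<delta>r o1 o2 S D X lstar"
  shows "AE z in D. z \<in> X"
proof -
  interpret prob_space D using data_modelD(5)[OF assms] .
  show ?thesis
    using data_modelD(7,8)[OF assms] by (intro AE_prob_1) (simp add: emeasure_eq_measure)
qed

lemma data_model_grad_noise_bound:
  assumes dm: "data_model cS n d p \<delta>d \<delta>r o1 o2 S D X lstar"
  shows "AE z in D. vnorm d (grad_noise n o1 o2 z) \<le> real n + 1"
  using data_model_AE_in_X[OF dm]
proof eventually_elim
  case (elim z)
  obtain x y where z: "z = (x, y)" by fastforce
  have "\<bar>y\<bar> = 1" using data_model_sample(1)[OF dm elim[unfolded z]] by auto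
  have "vnorm d (signed_patch_sum n z) \<le> (\<Sum>j<n. vnorm d (x j))"
    using vnorm_sum_le[of d x "{..<n}"] \<open>\<bar>y\<bar> = 1\<close> by (simp add: z signed_patch_sum_def vnorm_scale)
  also have "\<dots> = real n"
    using data_model_patch_unit[OF dm elim[unfolded z]] by (simp add: vnorm_def)
  finally have sps: "vnorm d (signed_patch_sum n z) \<le> real n" .
  have "vnorm d (mean_dir o1 o2) = vnorm d (\<lambda>i. o1 i - o2 i) / 2"
    by (simp add: mean_dir_def vnorm_divide)
  also have "\<dots> \<le> 1"
    using vnorm_diff_le[of d o1 o2] data_modelD(1,2)[OF dm] by (simp add: vnorm_def)
  finally show ?case
    using sps vnorm_diff_le[of d "signed_patch_sum n z" "mean_dir o1 o2"]
    by (simp add: grad_noise_def)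
qed

lemma perm_invariant_patch_sum: "perm_invariant n {x \<in> space inp_space. (\<Sum>j<n. x j i) \<in> U}"
  unfolding perm_invariant_def
proof (intro allI impI)
  fix \<pi> and x :: inp
  assume "\<pi> permutes {..<n}"
  then have "(\<Sum>j<n. (x \<circ> \<pi>) j i) = (\<Sum>j<n. x j i)"
    using sum.permute[of \<pi> "{..<n}" "\<lambda>j. x j i"] by (simp add: comp_def)
  then show "x \<in> {x \<in> space inp_space. (\<Sum>j<n. x j i) \<in> U} \<longleftrightarrow>
             x \<circ> \<pi> \<in> {x \<in> space inp_space. (\<Sum>j<n. x j i) \<in> U}"
    by (simp add: space_inp_space)
qed

definition irr_patch_sum :: "nat \<Rightarrow> vec \<Rightarrow> vec \<Rightarrow> inp \<Rightarrow> nat \<Rightarrow> real" where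
  "irr_patch_sum n o1 o2 x i = (\<Sum>j<n. irr_part n o1 o2 x j i)"

lemma measurable_irr_patch_sum [measurable]:
  "(\<lambda>z. irr_patch_sum n o1 o2 (fst z) i) \<in> borel_measurable sample_space"
proof -
  have eq: "(\<lambda>z. irr_patch_sum n o1 o2 (fst z) i)
      = (\<lambda>z. \<Sum>j<n. if fst z j \<noteq> o1 \<and> fst z j \<noteq> o2 then fst z j i else 0)"
    by (auto simp: irr_patch_sum_def irr_part_def fun_eq_iff intro!: sum.cong)
  show ?thesis unfolding eq by measurable
qed

lemma data_model_patch_sum_split:
  assumes dm: "data_model cS n d p \<delta>d \<delta>r o1 o2 S D X lstar" and "(x, y) \<in> X"
  shows "(\<Sum>j<n. x j i) = (if y = 1 then o1 i else o2 i) + irr_patch_sum n o1 o2 x i"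
proof -
  obtain j0 where "j0 < n" and j0: "x j0 = (if y = 1 then o1 else o2)"
    and irr: "\<And>j. j < n \<Longrightarrow> j \<noteq> j0 \<Longrightarrow> \<exists>k<p. x j \<in> S k"
    using data_model_sample(2)[OF assms] by blast
  have "x j i = (if j = j0 then x j0 i else 0) + irr_part n o1 o2 x j i" if "j < n" for j
    using that j0 irr[OF that] data_model_irrelevant(2,3)[OF dm]
    by (cases "j = j0") (auto simp: irr_part_def)
  then have "(\<Sum>j<n. x j i) = (\<Sum>j<n. (if j = j0 then x j0 i else 0) + irr_part n o1 o2 x j i)"
    by (intro sum.cong) auto
  then show ?thesis
    using \<open>j0 < n\<close> j0 by (simp add: sum.distrib irr_patch_sum_def)
qed

lemma data_model_irr_patch_sum_bound:
  assumes dm: "data_model cS n d p \<delta>d \<delta>r o1 o2 S D X lstar" and "(x, y) \<in> X" "i < d"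
  shows "\<bar>irr_patch_sum n o1 o2 x i\<bar> \<le> real n"
proof -
  have "\<bar>irr_part n o1 o2 x j i\<bar> \<le> 1" for j
    using abs_coord_le_vnorm[OF \<open>i < d\<close>, of "x j"] data_model_patch_unit[OF assms(1,2)]
    by (auto simp: irr_part_def vnorm_def)
  then have "(\<Sum>j<n. \<bar>irr_part n o1 o2 x j i\<bar>) \<le> real n"
    using sum_mono[of "{..<n}" "\<lambda>j. \<bar>irr_part n o1 o2 x j i\<bar>" "\<lambda>_. 1"] by simp
  then show ?thesis
    using sum_abs[of "\<lambda>j. irr_part n o1 o2 x j i" "{..<n}"] unfolding irr_patch_sum_def by linarith
qed

lemma data_model_irr_patch_sum_symmetric:
  assumes dm: "data_model cS n d p \<delta>d \<delta>r o1 o2 S D X lstar"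
  shows "(\<integral>z. indicator {z \<in> space D. snd z = 1} z * irr_patch_sum n o1 o2 (fst z) i \<partial>D)
       = (\<integral>z. indicator {z \<in> space D. snd z = -1} z * irr_patch_sum n o1 o2 (fst z) i \<partial>D)"
proof (rule integral_indicator_eq_if_measure_eq)
  \<comment> \<open>the only use of the hypothesis that irrelevant patches are distributed alike in both classes\<close>
  fix U :: "real set" assume [measurable]: "U \<in> sets borel"
  define A where "A = {x \<in> space inp_space. (\<Sum>j<n. x j i) \<in> U}"
  have "A \<in> sets inp_space"
    unfolding A_def using measurable_inp_coord[measurable] by measurable
  then have "measure D {z \<in> space D. snd z = 1 \<and> irr_part n o1 o2 (fst z) \<in> A}
           = measure D {z \<in> space D. snd z = -1 \<and> irr_part n o1 o2 (fst z) \<in> A}"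
    using dm perm_invariant_patch_sum[of n i U, folded A_def] unfolding data_model_def by blast
  moreover have "{z \<in> space D. snd z = y \<and> irr_part n o1 o2 (fst z) \<in> A}
      = (\<lambda>z. irr_patch_sum n o1 o2 (fst z) i) -` U \<inter> {z \<in> space D. snd z = y}" for y
    by (auto simp: A_def irr_patch_sum_def space_inp_space)
  ultimately show "measure D ((\<lambda>z. irr_patch_sum n o1 o2 (fst z) i) -` U \<inter> {z \<in> space D. snd z = 1})
      = measure D ((\<lambda>z. irr_patch_sum n o1 o2 (fst z) i) -` U \<inter> {z \<in> space D. snd z = -1})"
    by simp
qed (use data_modelD(5)[OF dm] data_model_label_event[OF dm]
       data_model_measurable[OF dm measurable_irr_patch_sum] in \<open>auto simp: prob_space_def\<close>)

lemma integral_indicator_mult_add: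
  fixes f :: "'a \<Rightarrow> real"
  assumes "finite_measure M" "C \<in> sets M" "integrable M (\<lambda>z. indicator C z * f z)"
  shows "integrable M (\<lambda>z. indicator C z * (c + f z))"
    and "(\<integral>z. indicator C z * (c + f z) \<partial>M) = measure M C * c + (\<integral>z. indicator C z * f z \<partial>M)"
proof -
  interpret finite_measure M by fact
  have "integrable M (\<lambda>z. indicator C z * c)"
    using \<open>C \<in> sets M\<close> by (auto simp: less_top[symmetric])
  then show "integrable M (\<lambda>z. indicator C z * (c + f z))"
    and "(\<integral>z. indicator C z * (c + f z) \<partial>M) = measure M C * c + (\<integral>z. indicator C z * f z \<partial>M)"
    using assms(2,3) by (simp_all add: distrib_left integral_mult_left_zero)
qed

lemma data_model_grad_noise_mean:
  assumes dm: "data_model cS n d p \<delta>d \<delta>r o1 o2 S D X lstar" and "i < d"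
  shows "prob_space.expectation D (\<lambda>z. grad_noise n o1 o2 z i) = 0"
proof -
  interpret prob_space D using data_modelD(5)[OF dm] .
  define Y1 where "Y1 = {z \<in> space D. snd z = 1}"
  define Ym where "Ym = {z \<in> space D. snd z = -1}"
  define R where "R z = irr_patch_sum n o1 o2 (fst z) i" for z :: sample
  have [measurable]: "R \<in> borel_measurable D"
    unfolding R_def by (rule data_model_measurable[OF dm measurable_irr_patch_sum])
  have Y [measurable]: "Y1 \<in> sets D" "Ym \<in> sets D"
    unfolding Y1_def Ym_def by (rule data_model_label_event[OF dm])+
  have "AE z in D. \<bar>R z\<bar> \<le> real n"
    using data_model_AE_in_X[OF dm]
    by eventually_elim (metis R_def data_model_irr_patch_sum_bound[OF dm _ \<open>i < d\<close>] prod.collapse)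
  then have integrable: "integrable D (\<lambda>z. indicator C z * R z)" if "C \<in> sets D" for C
    using that by (intro integrable_const_bound[where B = "real n"])
      (auto simp: indicator_def elim: AE_mp)
  note shift = integral_indicator_mult_add[OF finite_measure_axioms _ integrable]
  have "AE z in D. grad_noise n o1 o2 z i
      = indicator Y1 z * (o1 i + R z) - indicator Ym z * (o2 i + R z) - mean_dir o1 o2 i"
    using data_model_AE_in_X[OF dm]
  proof eventually_elim
    case (elim z)
    obtain x y where z: "z = (x, y)" by fastforce
    then show ?case
      using data_model_patch_sum_split[OF dm elim[unfolded z], of i]
        data_model_sample(1)[OF dm elim[unfolded z]]
        elim sets.sets_into_space[OF data_modelD(7)[OF dm]]
      by (auto simp: grad_noise_def signed_patch_sum_def R_def Y1_def Ym_def indicator_def)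
  qed
  then have "expectation (\<lambda>z. grad_noise n o1 o2 z i)
      = (\<integral>z. indicator Y1 z * (o1 i + R z) - indicator Ym z * (o2 i + R z) - mean_dir o1 o2 i \<partial>D)"
    using data_model_measurable_grad_noise[OF dm] by (intro integral_cong_AE) auto
  also have "\<dots> = (\<integral>z. indicator Y1 z * (o1 i + R z) \<partial>D) - (\<integral>z. indicator Ym z * (o2 i + R z) \<partial>D)
                   - mean_dir o1 o2 i"
    using shift(1) Y by (simp add: prob_space)
  also have "\<dots> = 0"
  proof -
    have half: "measure D Y1 = 1/2" "measure D Ym = 1/2"
      using data_modelD(9,10)[OF dm] by (simp_all add: Y1_def Ym_def)
    have "(\<integral>z. indicator Y1 z * R z \<partial>D) = (\<integral>z. indicator Ym z * R z \<partial>D)"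
      using data_model_irr_patch_sum_symmetric[OF dm, of i] by (simp add: Y1_def Ym_def R_def)
    then show ?thesis
      using shift(2)[OF Y(1), of "o1 i", unfolded half] shift(2)[OF Y(2), of "o2 i", unfolded half]
      unfolding mean_dir_def by simp
  qed
  finally show ?thesis .
qed

section \<open>The concentration event\<close>

definition concentration_event ::
  "nat \<Rightarrow> nat \<Rightarrow> real \<Rightarrow> sample measure \<Rightarrow> vec \<Rightarrow> vec \<Rightarrow> nat \<Rightarrow> real \<Rightarrow> real
    \<Rightarrow> ((vec \<times> vec) \<times> (nat \<Rightarrow> sample)) set" where
  "concentration_event n d \<sigma> D o1 o2 N \<epsilon>\<^sub>w \<epsilon>\<^sub>g = {\<omega> \<in> space (train_space d \<sigma> D).
     vnorm d (fst (fst \<omega>)) \<le> \<epsilon>\<^sub>w \<and> vnorm d (snd (fst \<omega>)) \<le> \<epsilon>\<^sub>w \<and>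
     vnorm d (\<lambda>i. \<Sum>k<N. grad_noise n o1 o2 (snd \<omega> k) i) \<le> \<epsilon>\<^sub>g}"

lemma measure_pair_measure_Times:
  assumes "sigma_finite_measure N" "A \<in> sets M" "B \<in> sets N"
  shows "measure (M \<Otimes>\<^sub>M N) (A \<times> B) = measure M A * measure N B"
proof -
  interpret N: sigma_finite_measure N by fact
  show ?thesis
    using assms(2,3) by (simp add: measure_def N.emeasure_pair_measure_Times enn2real_mult)
qed

lemma concentration_event_prob:
  assumes dm: "data_model cS n d p \<delta>d \<delta>r o1 o2 S D X lstar"
    and "\<sigma> > 0" "\<epsilon>\<^sub>w > 0" "\<epsilon>\<^sub>g \<ge> 0" "N > 0"
  shows "concentration_event n d \<sigma> D o1 o2 N \<epsilon>\<^sub>w \<epsilon>\<^sub>g \<in> sets (train_space d \<sigma> D)"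
    and "measure (train_space d \<sigma> D) (concentration_event n d \<sigma> D o1 o2 N \<epsilon>\<^sub>w \<epsilon>\<^sub>g)
          \<ge> 1 - (2 * (real d * \<sigma>\<^sup>2 / \<epsilon>\<^sub>w\<^sup>2) + exp (1/2 - \<epsilon>\<^sub>g\<^sup>2 / (4 * real N * (real n + 1)\<^sup>2)))"
proof -
  let ?G = "gauss_init d \<sigma>"
  let ?P = "PiM UNIV (\<lambda>_::nat. D)"
  let ?T = "train_space d \<sigma> D"
  interpret D: prob_space D using data_modelD(5)[OF dm] .
  interpret G: prob_space ?G using \<open>\<sigma> > 0\<close> by (rule gauss_init_prob_space)
  interpret P: prob_space ?P by (rule prob_space_PiM) (simp add: D.prob_space_axioms)
  interpret GG: pair_prob_space ?G ?G by unfold_locales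
  interpret T: prob_space ?T
    unfolding train_space_def by (intro prob_space_pair GG.prob_space_axioms P.prob_space_axioms)
  note [measurable] = data_model_measurable_grad_noise[OF dm]
  define A\<^sub>w where "A\<^sub>w = {w \<in> space ?G. \<epsilon>\<^sub>w < vnorm d w}"
  define A\<^sub>g where "A\<^sub>g = {x \<in> space ?P. \<epsilon>\<^sub>g < vnorm d (\<lambda>i. \<Sum>k<N. grad_noise n o1 o2 (x k) i)}"
  have [measurable]: "A\<^sub>w \<in> sets ?G"
    unfolding A\<^sub>w_def by (simp add: gauss_init_def vnorm_def vinner_def)
  have [measurable]: "A\<^sub>g \<in> sets ?P" unfolding A\<^sub>g_def vnorm_def vinner_def by measurable
  define B1 where "B1 = (A\<^sub>w \<times> space ?G) \<times> space ?P"
  define B2 where "B2 = (space ?G \<times> A\<^sub>w) \<times> space ?P"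
  define B3 where "B3 = (space ?G \<times> space ?G) \<times> A\<^sub>g"
  have B_sets: "B1 \<in> sets ?T" "B2 \<in> sets ?T" "B3 \<in> sets ?T"
    unfolding B1_def B2_def B3_def train_space_def by auto
  have event_eq: "concentration_event n d \<sigma> D o1 o2 N \<epsilon>\<^sub>w \<epsilon>\<^sub>g = space ?T - (B1 \<union> B2 \<union> B3)"
    unfolding concentration_event_def B1_def B2_def B3_def A\<^sub>w_def A\<^sub>g_def train_space_def
    by (auto simp: space_pair_measure not_le)
  then show event: "concentration_event n d \<sigma> D o1 o2 N \<epsilon>\<^sub>w \<epsilon>\<^sub>g \<in> sets ?T"
    using B_sets by auto
  have "\<epsilon>\<^sub>g < vnorm d v \<longleftrightarrow> \<epsilon>\<^sub>g\<^sup>2 < (vnorm d v)\<^sup>2" for v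
    using power2_le_iff_abs_le[OF \<open>\<epsilon>\<^sub>g \<ge> 0\<close>, of "vnorm d v"] by (simp add: not_le[symmetric])
  then have A\<^sub>g_sq:
    "A\<^sub>g = {x \<in> space ?P. \<epsilon>\<^sub>g\<^sup>2 < (vnorm d (\<lambda>i. \<Sum>k<N. grad_noise n o1 o2 (x k) i))\<^sup>2}"
    unfolding A\<^sub>g_def by blast
  have "measure ?G A\<^sub>w \<le> real d * \<sigma>\<^sup>2 / \<epsilon>\<^sub>w\<^sup>2"
    using emeasure_gauss_init_vnorm_gt_le[OF \<open>\<sigma> > 0\<close> \<open>\<epsilon>\<^sub>w > 0\<close>, of d] \<open>\<sigma> > 0\<close>
    by (simp add: A\<^sub>w_def G.emeasure_eq_measure)
  moreover have "measure ?P A\<^sub>g \<le> exp (1/2 - \<epsilon>\<^sub>g\<^sup>2 / (4 * real N * (real n + 1)\<^sup>2))"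
    using emeasure_vnorm_sum_tail_le_PiM_UNIV[OF D.prob_space_axioms
        data_model_measurable_grad_noise[OF dm]
        data_model_grad_noise_bound[OF dm] data_model_grad_noise_mean[OF dm] \<open>N > 0\<close>]
    by (simp add: A\<^sub>g_sq P.emeasure_eq_measure add_pos_nonneg)
  moreover have "measure ?T B1 = measure ?G A\<^sub>w" "measure ?T B2 = measure ?G A\<^sub>w"
    "measure ?T B3 = measure ?P A\<^sub>g"
    unfolding B1_def B2_def B3_def train_space_def
    by (simp_all add: measure_pair_measure_Times P.sigma_finite_measure_axioms
        G.sigma_finite_measure_axioms space_pair_measure G.prob_space P.prob_space)
  moreover have "measure ?T (B1 \<union> B2 \<union> B3) \<le> measure ?T B1 + measure ?T B2 + measure ?T B3"
    using B_sets by (intro order.trans[OF measure_Un_le] add_right_mono measure_Un_le) auto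
  ultimately show "measure ?T (concentration_event n d \<sigma> D o1 o2 N \<epsilon>\<^sub>w \<epsilon>\<^sub>g)
          \<ge> 1 - (2 * (real d * \<sigma>\<^sup>2 / \<epsilon>\<^sub>w\<^sup>2) + exp (1/2 - \<epsilon>\<^sub>g\<^sup>2 / (4 * real N * (real n + 1)\<^sup>2)))"
    unfolding event_eq using B_sets by (simp add: T.prob_compl)
qed

lemma ln_ge_half: "2 \<le> n \<Longrightarrow> 1/2 \<le> ln (real n)"
proof -
  assume "2 \<le> n"
  then have "ln 2 \<le> ln (real n)" by simp
  then show ?thesis using ln2_ge_two_thirds by linarith
qed

lemma init_failure_le:
  fixes n :: nat
  assumes "2 \<le> n" "d \<ge> 1" "\<delta> > 0" "\<eta> = 1 / real n"
    and "\<sigma> = 1 / (real n ^ 2 * ln (real n) * sqrt (real d))" and "T \<ge> ln (real n) / \<delta>"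
  shows "2 * (real d * \<sigma>\<^sup>2 / (\<eta> * T * \<delta> / 32)\<^sup>2) \<le> 32768 / real n"
proof -
  define L where "L = ln (real n)"
  have "L \<ge> 1/2" using ln_ge_half[OF \<open>2 \<le> n\<close>] by (simp add: L_def)
  have "real n \<ge> 2" using \<open>2 \<le> n\<close> by simp
  have d\<sigma>: "real d * \<sigma>\<^sup>2 = 1 / (real n ^ 4 * L\<^sup>2)"
    unfolding assms(5) L_def[symmetric] using \<open>d \<ge> 1\<close> \<open>real n \<ge> 2\<close> \<open>L \<ge> 1/2\<close>
    by (simp add: power_mult_distrib power_divide field_simps)
  have "L / (32 * real n) \<le> \<eta> * T * \<delta> / 32"
    using assms(3,4,6) \<open>real n \<ge> 2\<close> by (simp add: L_def field_simps)
  then have "(L / (32 * real n))\<^sup>2 \<le> (\<eta> * T * \<delta> / 32)\<^sup>2"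
    using \<open>L \<ge> 1/2\<close> \<open>real n \<ge> 2\<close> by (intro power_mono) auto
  moreover have "0 < (L / (32 * real n))\<^sup>2"
    using \<open>L \<ge> 1/2\<close> \<open>real n \<ge> 2\<close> by simp
  ultimately have "real d * \<sigma>\<^sup>2 / (\<eta> * T * \<delta> / 32)\<^sup>2
      \<le> (1 / (real n ^ 4 * L\<^sup>2)) / (L / (32 * real n))\<^sup>2"
    unfolding d\<sigma> by (intro divide_left_mono mult_pos_pos) auto
  also have "\<dots> = 1024 / (real n * (real n * L ^ 4))"
    using \<open>L \<ge> 1/2\<close> \<open>real n \<ge> 2\<close> by (simp add: power2_eq_square power4_eq_xxxx field_simps)
  also have "\<dots> \<le> 1024 / (real n * (1/16))"
  proof -
    have "(1/2) ^ 4 \<le> L ^ 4" using \<open>L \<ge> 1/2\<close> by (intro power_mono) auto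
    then have "1/16 \<le> L ^ 4" by (simp add: power_divide)
    also have "L ^ 4 \<le> real n * L ^ 4" using \<open>real n \<ge> 2\<close> by (simp add: mult_le_cancel_right1)
    finally have "1/16 \<le> real n * L ^ 4" .
    then show ?thesis using \<open>real n \<ge> 2\<close> by (intro divide_left_mono mult_left_mono) auto
  qed
  finally show ?thesis by simp
qed

lemma noise_failure_le:
  fixes n B T :: nat
  assumes "2 \<le> n" "\<delta> > 0" "T \<ge> 1" "real B \<ge> 4096 * (real n)\<^sup>2 * ln (real n) / \<delta>\<^sup>2"
  shows "exp (1/2 - (real T * real B * \<delta> / 16)\<^sup>2 / (4 * real (T * B) * (real n + 1)\<^sup>2))
           \<le> 2 / real n"
proof -
  define L where "L = ln (real n)"
  have "L \<ge> 1/2" using ln_ge_half[OF \<open>2 \<le> n\<close>] by (simp add: L_def)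
  have "real n \<ge> 2" using \<open>2 \<le> n\<close> by simp
  have "0 < 4096 * (real n)\<^sup>2 * L / \<delta>\<^sup>2"
    using \<open>L \<ge> 1/2\<close> \<open>real n \<ge> 2\<close> \<open>\<delta> > 0\<close> by simp
  then have "real B > 0"
    using assms(4) unfolding L_def by linarith
  have "L \<le> real B * \<delta>\<^sup>2 / (4096 * (real n)\<^sup>2)"
    using assms(4) \<open>\<delta> > 0\<close> \<open>real n \<ge> 2\<close> by (simp add: L_def field_simps)
  also have "\<dots> \<le> real T * real B * \<delta>\<^sup>2 / (1024 * (real n + 1)\<^sup>2)"
  proof (rule frac_le)
    show "real B * \<delta>\<^sup>2 \<le> real T * real B * \<delta>\<^sup>2"
      using \<open>T \<ge> 1\<close> \<open>real B > 0\<close> by (simp add: mult_le_cancel_right1)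
    have "(real n + 1)\<^sup>2 \<le> (2 * real n)\<^sup>2"
      using \<open>real n \<ge> 2\<close> by (intro power_mono) auto
    then show "1024 * (real n + 1)\<^sup>2 \<le> 4096 * (real n)\<^sup>2"
      by (simp add: power_mult_distrib)
  qed (use \<open>real B > 0\<close> \<open>\<delta> > 0\<close> in auto)
  also have "\<dots> = (real T * real B * \<delta> / 16)\<^sup>2 / (4 * real (T * B) * (real n + 1)\<^sup>2)"
  proof -
    have "c * \<delta>\<^sup>2 / (1024 * (real n + 1)\<^sup>2) = (c * \<delta> / 16)\<^sup>2 / (4 * c * (real n + 1)\<^sup>2)"
      if "c > 0" for c
      using that by (simp add: power2_eq_square)
    then show ?thesis
      using \<open>T \<ge> 1\<close> \<open>real B > 0\<close> by simp
  qed
  finally have "exp (1/2 - (real T * real B * \<delta> / 16)\<^sup>2 / (4 * real (T * B) * (real n + 1)\<^sup>2))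
      \<le> exp (1/2 - L)"
    by simp
  also have "\<dots> = exp (1/2) / real n"
    using \<open>real n \<ge> 2\<close> by (simp add: L_def exp_diff)
  also have "\<dots> \<le> 2 / real n"
    using exp_half_le2 \<open>real n \<ge> 2\<close> by (simp add: divide_right_mono)
  finally show ?thesis .
qed

lemma training_parameters_pos:
  assumes "2 \<le> n" and dm: "data_model cS n d p \<delta>d \<delta>r o1 o2 S D X lstar"
    and \<sigma>: "\<sigma> = 1 / (real n ^ 2 * ln (real n) * sqrt (real d))" and \<eta>: "\<eta> = 1 / real n"
    and B: "real B \<ge> 4096 * (real n)\<^sup>2 * ln (real n) / (1 - \<delta>d)\<^sup>2"
    and T: "real T \<ge> ln (real n) / (1 - \<delta>d)"
  shows "d \<ge> 1" "\<sigma> > 0" "\<eta> > 0" "B > 0" "T \<ge> 1"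
proof -
  have "1 - \<delta>d > 0" "ln (real n) > 0"
    using data_modelD(4)[OF dm] ln_ge_half[OF \<open>2 \<le> n\<close>] by simp_all
  show "d \<ge> 1"
    using data_modelD(1)[OF dm] by (cases d) (simp_all add: vinner_def)
  then show "\<sigma> > 0" "\<eta> > 0"
    using \<open>2 \<le> n\<close> \<open>ln (real n) > 0\<close> by (simp_all add: \<eta> \<sigma>)
  have "0 < 4096 * (real n)\<^sup>2 * ln (real n) / (1 - \<delta>d)\<^sup>2"
    using \<open>2 \<le> n\<close> \<open>1 - \<delta>d > 0\<close> \<open>ln (real n) > 0\<close> by simp
  then show "B > 0" using B by simp
  have "0 < ln (real n) / (1 - \<delta>d)"
    using \<open>1 - \<delta>d > 0\<close> \<open>ln (real n) > 0\<close> by simp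
  then show "T \<ge> 1" using T by simp
qed

(* The radii leave a total error of 3/32 eta T (1 - delta_d), below the slack
   eta T (1 - delta_d)/8 required by kernel_prefers_target. *)
lemma concentration_event_likely:
  assumes "2 \<le> n" and dm: "data_model cS n d p \<delta>d \<delta>r o1 o2 S D X lstar"
    and \<sigma>: "\<sigma> = 1 / (real n ^ 2 * ln (real n) * sqrt (real d))" and \<eta>: "\<eta> = 1 / real n"
    and B: "real B \<ge> 4096 * (real n)\<^sup>2 * ln (real n) / (1 - \<delta>d)\<^sup>2"
    and T: "real T \<ge> ln (real n) / (1 - \<delta>d)"
  defines "E \<equiv> concentration_event n d \<sigma> D o1 o2 (T * B)
                 (\<eta> * real T * (1 - \<delta>d) / 32) (real T * real B * (1 - \<delta>d) / 16)"
  shows "E \<in> sets (train_space d \<sigma> D)" "measure (train_space d \<sigma> D) E \<ge> 1 - 40000 / real n"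
proof -
  note pos = training_parameters_pos[OF \<open>2 \<le> n\<close> dm \<sigma> \<eta> B T]
  have "1 - \<delta>d > 0" using data_modelD(4)[OF dm] by simp
  note event = concentration_event_prob[OF dm \<open>\<sigma> > 0\<close> _ _ _, of "\<eta> * real T * (1 - \<delta>d) / 32"
      "real T * real B * (1 - \<delta>d) / 16" "T * B", folded E_def]
  show "E \<in> sets (train_space d \<sigma> D)"
    using event(1) pos \<open>1 - \<delta>d > 0\<close> by simp
  have "2 * (real d * \<sigma>\<^sup>2 / (\<eta> * real T * (1 - \<delta>d) / 32)\<^sup>2) \<le> 32768 / real n"
    using init_failure_le[OF \<open>2 \<le> n\<close> pos(1) \<open>1 - \<delta>d > 0\<close> \<eta> \<sigma> T] .
  moreover have "exp (1/2 - (real T * real B * (1 - \<delta>d) / 16)\<^sup>2 / (4 * real (T * B) * (real n + 1)\<^sup>2))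
      \<le> 2 / real n"
    using noise_failure_le[OF \<open>2 \<le> n\<close> \<open>1 - \<delta>d > 0\<close> pos(5) B] .
  moreover have "32768 / real n + 2 / real n \<le> 40000 / real n"
    by (simp add: add_divide_distrib[symmetric] divide_right_mono)
  ultimately show "measure (train_space d \<sigma> D) E \<ge> 1 - 40000 / real n"
    using event(2) pos \<open>1 - \<delta>d > 0\<close> by fastforce
qed

lemma router_training_succeeds:
  assumes "2 \<le> n" and dm: "data_model cS n d p \<delta>d \<delta>r o1 o2 S D X lstar" and "lstar \<le> l"
    and \<sigma>: "\<sigma> = 1 / (real n ^ 2 * ln (real n) * sqrt (real d))" and \<eta>: "\<eta> = 1 / real n"
    and B: "real B \<ge> 4096 * (real n)\<^sup>2 * ln (real n) / (1 - \<delta>d)\<^sup>2"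
    and T: "real T \<ge> ln (real n) / (1 - \<delta>d)"
  shows "\<exists>E \<in> sets (train_space d \<sigma> D).
           measure (train_space d \<sigma> D) E \<ge> 1 - 40000 / real n \<and>
           (\<forall>((w10, w20), s) \<in> E.
              let (w1, w2) = router_sgd n B \<eta> s w10 w20 T in
              \<forall>(x, y) \<in> X. \<forall>j<n.
                (y = 1 \<and> x j = o1 \<longrightarrow> (\<forall>J. is_topl d n l w1 x J \<longrightarrow> j \<in> J)) \<and>
                (y = -1 \<and> x j = o2 \<longrightarrow> (\<forall>J. is_topl d n l w2 x J \<longrightarrow> j \<in> J)))"
proof -
  note pos = training_parameters_pos[OF \<open>2 \<le> n\<close> dm \<sigma> \<eta> B T]
  define a where "a = \<eta> * real T * (1 - \<delta>d)"
  have "a > 0" using pos data_modelD(4)[OF dm] by (simp add: a_def)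
  have "let (w1, w2) = router_sgd n B \<eta> s w10 w20 T in
      \<forall>(x, y) \<in> X. \<forall>j<n.
        (y = 1 \<and> x j = o1 \<longrightarrow> (\<forall>J. is_topl d n l w1 x J \<longrightarrow> j \<in> J)) \<and>
        (y = -1 \<and> x j = o2 \<longrightarrow> (\<forall>J. is_topl d n l w2 x J \<longrightarrow> j \<in> J))"
    if "((w10, w20), s) \<in> concentration_event n d \<sigma> D o1 o2 (T * B)
          (\<eta> * real T * (1 - \<delta>d) / 32) (real T * real B * (1 - \<delta>d) / 16)" for w10 w20 s
  proof (rule router_sgd_routes_discriminative[OF dm \<open>lstar \<le> l\<close> pos(3) _ pos(4)])
    let ?N = "vnorm d (\<lambda>i. \<Sum>k<T * B. grad_noise n o1 o2 (s k) i)"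
    have "vnorm d w10 \<le> a / 32" "vnorm d w20 \<le> a / 32"
      and N: "?N \<le> real T * real B * (1 - \<delta>d) / 16"
      using that by (simp_all add: concentration_event_def a_def)
    moreover have "\<eta> / real B * ?N \<le> a / 16"
    proof -
      have "\<eta> / real B * ?N \<le> \<eta> / real B * (real T * real B * (1 - \<delta>d) / 16)"
        using N pos by (intro mult_left_mono) auto
      also have "\<dots> = a / 16"
        using pos by (simp add: a_def)
      finally show ?thesis .
    qed
    ultimately show "vnorm d w10 + \<eta> / real B * ?N < \<eta> * real T * (1 - \<delta>d) / 8"
      and "vnorm d w20 + \<eta> / real B * ?N < \<eta> * real T * (1 - \<delta>d) / 8"
      using \<open>a > 0\<close> unfolding a_def[symmetric] by linarith+
  qed (use pos in simp)
  then show ?thesis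
    using concentration_event_likely[OF \<open>2 \<le> n\<close> dm \<sigma> \<eta> B T] by blast
qed

theorem lemma4p1:
  shows "\<forall>cS > 0. \<exists>c\<sigma> > 0. \<exists>c\<eta> > 0. \<exists>CB > 0. \<exists>CT > 0. \<exists>a::nat. \<exists>C > 0. \<exists>k::nat. k > 0 \<and>
    (\<forall>n d p \<delta>d \<delta>r o1 o2 S D X lstar l \<sigma> \<eta> (B::nat) (T::nat).
       2 \<le> n \<longrightarrow>
       data_model cS n d p \<delta>d \<delta>r o1 o2 S D X lstar \<longrightarrow>
       lstar \<le> l \<longrightarrow>
       \<sigma> = c\<sigma> / (real n ^ 2 * ln (real n) * sqrt (real d)) \<longrightarrow>
       \<eta> = c\<eta> / real n \<longrightarrow>
       real B \<ge> CB * (real n)\<^sup>2 * ln (real n) ^ a / (1 - \<delta>d)\<^sup>2 \<longrightarrow>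
       real T \<ge> CT * ln (real n) ^ a / (1 - \<delta>d) \<longrightarrow>
       (\<exists>E \<in> sets (train_space d \<sigma> D).
          measure (train_space d \<sigma> D) E \<ge> 1 - C / real n ^ k \<and>
          (\<forall>((w10, w20), s) \<in> E.
             let (w1, w2) = router_sgd n B \<eta> s w10 w20 T in
             (\<forall>(x, y) \<in> X. \<forall>j<n.
                (y = 1 \<and> x j = o1 \<longrightarrow> (\<forall>J. is_topl d n l w1 x J \<longrightarrow> j \<in> J)) \<and>
                (y = -1 \<and> x j = o2 \<longrightarrow> (\<forall>J. is_topl d n l w2 x J \<longrightarrow> j \<in> J))))))"
  \<comment> \<open>witnesses \<open>c\<sigma> = c\<eta> = CT = 1\<close>, \<open>CB = 4096\<close>, \<open>a = 1\<close>, \<open>C = 40000\<close>, \<open>k = 1\<close>\<close>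
  apply (intro allI impI)
  apply (rule exI[of _ 1], rule conjI, simp, rule exI[of _ 1], rule conjI, simp)
  apply (rule exI[of _ 4096], rule conjI, simp, rule exI[of _ 1], rule conjI, simp)
  apply (rule exI[of _ 1], rule exI[of _ 40000], rule conjI, simp, rule exI[of _ 1])
  using router_training_succeeds by simp

end
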